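(* Let $\Theta=\begin{pmatrix} a&c\\ b&d\end{pmatrix}\in GL(2,\mathbb{Z})$ have no eigenvalue of absolute value $1$, and let $M$ be the mapping torus of the self-homeomorphism of the torus $T^2$ induced by $\Theta$ (a closed $\mathbb{S}ol^3$-manifold with $\pi=\pi_1(M)\cong\langle t,x,y\mid txt^{-1}=x^ay^b,\ tyt^{-1}=x^cy^d,\ xy=yx\rangle$). Let $\rho:\pi\to\mathbb{Z}/2\mathbb{Z}$ be the epimorphism with $\rho(t)=1$, $\rho(x)=\rho(y)=0$ (the unique epimorphism factoring through $\pi/\sqrt\pi\cong\mathbb{Z}$). Then $BU(M,\rho)=1$.
   Context: For a closed manifold $N$ and an epimorphism $\phi:\pi_1(N)\to\mathbb{Z}/2\mathbb{Z}$ (equivalently a nonzero class in $H^1(N;\mathbb{F}_2)$), let $N_\phi$ be the associated double cover with covering involution $t_\phi$. The Borsuk–Ulam index $BU(N,\phi)$ is the largest $k$ such that for every continuous map $f:N_\phi\to\mathbb{R}^k$ there is $x\in N_\phi$ with $f(x)=f(t_\phi(x))$. $\sqrt\pi$ denotes the unique maximal abelian normal subgroup of $\pi$ (here $\langle x,y\rangle\cong\mathbb{Z}^2$). *)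

theory Defs
  imports "HOL-Analysis.Analysis"
begin

definition BU_index :: "'a topology \<Rightarrow> ('a \<Rightarrow> 'a) \<Rightarrow> nat" where
  "BU_index X t = (GREATEST k. \<forall>f. continuous_map X (Euclidean_space k) f
        \<longrightarrow> (\<exists>x\<in>topspace X. f x = f (t x)))"

definition quot_top :: "('a::topological_space \<Rightarrow> 'a \<Rightarrow> bool) \<Rightarrow> 'a set topology" where
  "quot_top R = topology (\<lambda>U. U \<subseteq> UNIV // {(x,y). R x y} \<and> open (\<Union>U))"

definition Theta_map :: "int \<Rightarrow> int \<Rightarrow> int \<Rightarrow> int \<Rightarrow> real \<times> real \<Rightarrow> real \<times> real" where
  "Theta_map a b c d v = (of_int a * fst v + of_int c * snd v, of_int b * fst v + of_int d * snd v)"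

text \<open>Deck transformation t of the universal cover R^2 \<times> R of the mapping torus:
(v,s) \<mapsto> (Theta v, s+1).  x, y act by unit translations of R^2.\<close>
definition t_lift :: "int \<Rightarrow> int \<Rightarrow> int \<Rightarrow> int \<Rightarrow> (real \<times> real) \<times> real \<Rightarrow> (real \<times> real) \<times> real" where
  "t_lift a b c d p = (Theta_map a b c d (fst p), snd p + 1)"

definition ker_rho_gen :: "int \<Rightarrow> int \<Rightarrow> int \<Rightarrow> int \<Rightarrow> (real \<times> real) \<times> real \<Rightarrow> (real \<times> real) \<times> real \<Rightarrow> bool" where
  "ker_rho_gen a b c d p q \<longleftrightarrow>
     q = ((fst (fst p) + 1, snd (fst p)), snd p) \<or>
     q = ((fst (fst p), snd (fst p) + 1), snd p) \<or>
     q = t_lift a b c d (t_lift a b c d p)"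

text \<open>The double cover M_rho = (R^2 \<times> R) / ker rho, with ker rho = <x, y, t^2>.\<close>
definition M_rho :: "int \<Rightarrow> int \<Rightarrow> int \<Rightarrow> int \<Rightarrow> ((real \<times> real) \<times> real) set topology" where
  "M_rho a b c d = quot_top (equivclp (ker_rho_gen a b c d))"

definition t_rho :: "int \<Rightarrow> int \<Rightarrow> int \<Rightarrow> int \<Rightarrow> ((real \<times> real) \<times> real) set \<Rightarrow> ((real \<times> real) \<times> real) set" where
  "t_rho a b c d C = t_lift a b c d ` C"

end

theory Submission
  imports Defs
begin

text \<open>Points of \<open>M\<^sub>\<rho>\<close> are classes of the relation generated by \<open>x, y, t\<^sup>2\<close> on the
universal cover \<open>\<real>\<^sup>2 \<times> \<real>\<close>, and \<open>t\<^sub>\<rho>\<close> maps the class of \<open>p\<close> to the class of \<open>t p\<close>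
because \<open>\<Theta>\<close> is invertible over \<open>\<int>\<close>.

For the lower bound, a map \<open>f : M\<^sub>\<rho> \<rightarrow> \<real>\<close> lifts to \<open>h\<close> on the cover; then
\<open>G = h - h \<circ> t\<close> satisfies \<open>G \<circ> t = -G\<close> since \<open>t\<^sup>2\<close> is a deck transformation of \<open>M\<^sub>\<rho>\<close>,
so \<open>G\<close> vanishes somewhere on the connected cover.

For the upper bound, the height \<open>s\<close> is well defined modulo 2 on \<open>M\<^sub>\<rho>\<close> and
\<open>t\<close> raises it by 1, so \<open>(cos \<pi>s, sin \<pi>s)\<close> sends \<open>t\<^sub>\<rho>\<close> to the antipodal map of the
circle and is a coincidence-free map \<open>M\<^sub>\<rho> \<rightarrow> \<real>\<^sup>2\<close>.

Neither bound uses that \<open>\<Theta>\<close> has no eigenvalue of modulus 1: only the fibration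
of \<open>M\<close> over the circle matters.\<close>

lemma openin_quot_top:
  assumes "equivp E"
  shows "openin (quot_top E) U \<longleftrightarrow> U \<subseteq> UNIV // {(x,y). E x y} \<and> open (\<Union>U)"
proof -
  have equiv: "equiv UNIV {(x,y). E x y}"
    using equivp_equiv assms by fastforce
  have "S \<inter> T \<subseteq> UNIV // {(x,y). E x y} \<and> open (\<Union>(S \<inter> T))"
    if S: "S \<subseteq> UNIV // {(x,y). E x y}" "open (\<Union>S)"
      and T: "T \<subseteq> UNIV // {(x,y). E x y}" "open (\<Union>T)" for S T
  proof -
    have "\<Union>(S \<inter> T) = \<Union>S \<inter> \<Union>T"
      using quotient_disj[OF equiv] S T by blast
    then show ?thesis
      using S T by (simp add: open_Int le_infI1)
  qed
  moreover have "\<Union>K \<subseteq> UNIV // {(x,y). E x y} \<and> open (\<Union>(\<Union>K))"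
    if "\<forall>U\<in>K. U \<subseteq> UNIV // {(x,y). E x y} \<and> open (\<Union>U)" for K
  proof -
    have "\<Union>(\<Union>K) = (\<Union>U\<in>K. \<Union>U)" by blast
    then show ?thesis
      using that by (auto intro!: open_UN)
  qed
  ultimately have "istopology (\<lambda>U. U \<subseteq> UNIV // {(x,y). E x y} \<and> open (\<Union>U))"
    unfolding istopology_def by blast
  then show ?thesis
    unfolding quot_top_def by simp
qed

lemma topspace_quot_top:
  assumes "equivp E"
  shows "topspace (quot_top E) = UNIV // {(x,y). E x y}"
proof -
  have "\<Union>(UNIV // {(x,y). E x y}) = UNIV"
    using assms by (auto simp: quotient_def intro: equivp_reflp)
  then have "openin (quot_top E) (UNIV // {(x,y). E x y})"
    by (simp add: openin_quot_top[OF assms])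
  then show ?thesis
    unfolding topspace_def by (auto simp: openin_quot_top[OF assms])
qed

lemma class_in_quotient: "{q. E p q} \<in> UNIV // {(x,y). E x y}"
  unfolding quotient_def by auto

lemma quotient_elem_class:
  assumes "C \<in> UNIV // {(x,y). E x y}"
  obtains p where "C = {q. E p q}"
  using assms unfolding quotient_def by auto

lemma equivp_class_eq:
  assumes "equivp E" "E p q"
  shows "{r. E p r} = {r. E q r}"
  using assms by (auto, meson equivp_symp equivp_transp)+

lemma equivp_some_in_class:
  assumes "equivp E"
  shows "E p (SOME q. q \<in> {r. E p r})"
  using someI[of "\<lambda>q. q \<in> {r. E p r}" p] equivp_reflp[OF assms] by simp

lemma continuous_map_quot_top_class:
  assumes "equivp E"
  shows "continuous_map euclidean (quot_top E) (\<lambda>p. {q. E p q})"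
  unfolding continuous_map_def
proof (intro conjI allI impI)
  show "(\<lambda>p. {q. E p q}) \<in> topspace euclidean \<rightarrow> topspace (quot_top E)"
    by (simp add: topspace_quot_top[OF assms] class_in_quotient)
  fix U
  assume U: "openin (quot_top E) U"
  have "{p \<in> topspace euclidean. {q. E p q} \<in> U} = \<Union>U"
  proof safe
    fix p
    assume "{q. E p q} \<in> U"
    then show "p \<in> \<Union>U"
      using equivp_reflp[OF assms, of p] by blast
  next
    fix p C
    assume "p \<in> C" "C \<in> U"
    moreover obtain r where "C = {q. E r q}"
      using U \<open>C \<in> U\<close> by (auto simp: openin_quot_top[OF assms] elim: quotient_elem_class)
    ultimately show "{q. E p q} \<in> U"
      using equivp_class_eq[OF assms] by auto
  qed simp
  then show "openin euclidean {p \<in> topspace euclidean. {q. E p q} \<in> U}"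
    using U by (simp add: openin_quot_top[OF assms])
qed

lemma continuous_map_quot_top_descend:
  assumes "equivp E" "continuous_map euclidean Y g" "\<And>p q. E p q \<Longrightarrow> g p = g q"
  shows "continuous_map (quot_top E) Y (\<lambda>C. g (SOME p. p \<in> C))"
  unfolding continuous_map_def
proof (intro conjI allI impI)
  have g_class: "g (SOME p. p \<in> {q. E r q}) = g r" for r
    using assms(3) equivp_some_in_class[OF assms(1)] by (metis equivp_symp[OF assms(1)])
  show "(\<lambda>C. g (SOME p. p \<in> C)) \<in> topspace (quot_top E) \<rightarrow> topspace Y"
    using assms(2) g_class
    by (auto simp: topspace_quot_top[OF assms(1)] continuous_map_def elim!: quotient_elem_class)
  fix V
  assume V: "openin Y V"
  let ?S = "{C \<in> topspace (quot_top E). g (SOME p. p \<in> C) \<in> V}"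
  have "\<Union>?S = g -` V"
  proof (intro equalityI subsetI)
    fix r
    assume "r \<in> \<Union>?S"
    then obtain C where "r \<in> C" "C \<in> topspace (quot_top E)" "g (SOME p. p \<in> C) \<in> V"
      by blast
    moreover obtain p where "C = {q. E p q}"
      using \<open>C \<in> topspace (quot_top E)\<close>
      by (auto simp: topspace_quot_top[OF assms(1)] elim: quotient_elem_class)
    ultimately have "E p r" "g p \<in> V"
      using g_class[of p] by auto
    then show "r \<in> g -` V"
      using assms(3) by fastforce
  next
    fix r
    assume "r \<in> g -` V"
    then have "{q. E r q} \<in> ?S"
      using g_class by (simp add: topspace_quot_top[OF assms(1)] class_in_quotient)
    then show "r \<in> \<Union>?S"
      using equivp_reflp[OF assms(1), of r] by blast
  qed
  moreover have "openin euclidean {x \<in> topspace euclidean. g x \<in> V}"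
    using assms(2) V by (rule openin_continuous_map_preimage)
  ultimately show "openin (quot_top E) ?S"
    by (simp add: openin_quot_top[OF assms(1)] topspace_quot_top[OF assms(1)] vimage_def)
qed

lemma equivclp_preserved:
  assumes "equivp S" "\<And>p q. R p q \<Longrightarrow> S (T p) (T q)" "equivclp R p q"
  shows "S (T p) (T q)"
  using assms(3)
proof (induction rule: equivclp_induct)
  case base
  then show ?case by (rule equivp_reflp[OF assms(1)])
next
  case (step y z)
  then have "S (T y) (T z)"
    using assms(2) equivp_symp[OF assms(1)] by blast
  then show ?case
    using step.IH equivp_transp[OF assms(1)] by blast
qed

lemma equivclp_int_chain:
  fixes f :: "int \<Rightarrow> 'a"
  assumes "\<And>i. R (f i) (f (i + 1))"
  shows "equivclp R (f 0) (f m)"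
proof (induction m rule: int_induct[where k = 0])
  case base
  then show ?case by (simp add: equivp_reflp)
next
  case (step1 i)
  then show ?case
    using assms[of i] by (meson r_into_equivclp transpD transp_equivclp)
next
  case (step2 i)
  then show ?case
    using assms[of "i - 1"] by (metis diff_add_cancel r_into_equivclp equivclp_sym transpD transp_equivclp)
qed

lemma image_equiv_class:
  assumes "equivp E" "surj T" "\<And>p q. E p q \<Longrightarrow> E (T p) (T q)" "\<And>p. E p (T (T p))"
  shows "T ` {q. E p q} = {q. E (T p) q}"
proof safe
  fix r
  assume "E (T p) r"
  obtain q where r: "r = T q"
    using assms(2) by (metis surjD)
  have "E (T (T p)) (T (T q))"
    using assms(3) \<open>E (T p) r\<close> r by blast
  then have "E p q"
    using assms(4)[of p] assms(4)[of q] equivp_symp[OF assms(1)] equivp_transp[OF assms(1)] by metis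
  then show "r \<in> T ` {q. E p q}"
    using r by blast
qed (use assms(3) in blast)

lemma BU_index_eqI:
  assumes "\<And>f. continuous_map X (Euclidean_space n) f \<Longrightarrow> \<exists>x\<in>topspace X. f x = f (t x)"
    and "\<And>k. n < k \<Longrightarrow>
           \<exists>f. continuous_map X (Euclidean_space k) f \<and> (\<forall>x\<in>topspace X. f x \<noteq> f (t x))"
  shows "BU_index X t = n"
  unfolding BU_index_def
proof (rule Greatest_equality)
  show "\<forall>f. continuous_map X (Euclidean_space n) f \<longrightarrow> (\<exists>x\<in>topspace X. f x = f (t x))"
    using assms(1) by blast
next
  fix k
  assume "\<forall>f. continuous_map X (Euclidean_space k) f \<longrightarrow> (\<exists>x\<in>topspace X. f x = f (t x))"
  then show "k \<le> n"
    using assms(2) by (meson leI)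
qed

lemma connected_zero_of_opposite_values:
  fixes G :: "'a::topological_space \<Rightarrow> real"
  assumes "connected S" "continuous_on S G" "x \<in> S" "y \<in> S" "G y = - G x"
  shows "\<exists>z\<in>S. G z = 0"
proof -
  have conn: "connected (G ` S)"
    using assms(2,1) by (rule connected_continuous_image)
  have "G x \<in> G ` S" "G y \<in> G ` S"
    using assms(3,4) by auto
  then have "0 \<in> G ` S"
    using connected_ivt_hyperplane[OF conn, of _ _ 1 0] assms(5)
    by (cases "G x \<le> 0") (fastforce simp: inner_real_def)+
  then show ?thesis by auto
qed

abbreviation ker_rho_rel :: "int \<Rightarrow> int \<Rightarrow> int \<Rightarrow> int \<Rightarrow> (real \<times> real) \<times> real \<Rightarrow> (real \<times> real) \<times> real \<Rightarrow> bool" where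
  "ker_rho_rel a b c d \<equiv> equivclp (ker_rho_gen a b c d)"

lemma ker_rho_rel_translate:
  "ker_rho_rel a b c d ((x, y), s) ((x + of_int m, y + of_int n), s)"
proof -
  have "ker_rho_rel a b c d ((x, y), s) ((x + of_int m, y), s)"
    using equivclp_int_chain[of "ker_rho_gen a b c d" "\<lambda>i. ((x + of_int i, y), s)" m]
    by (simp add: ker_rho_gen_def add.assoc)
  moreover have "ker_rho_rel a b c d ((x + of_int m, y), s) ((x + of_int m, y + of_int n), s)"
    using equivclp_int_chain[of "ker_rho_gen a b c d" "\<lambda>i. ((x + of_int m, y + of_int i), s)" n]
    by (simp add: ker_rho_gen_def add.assoc)
  ultimately show ?thesis
    by (meson transpD transp_equivclp)
qed

lemma ker_rho_rel_t_lift_twice: "ker_rho_rel a b c d p (t_lift a b c d (t_lift a b c d p))"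
  by (simp add: ker_rho_gen_def r_into_equivclp)

text \<open>\<open>t x t\<^sup>-\<^sup>1 = x\<^sup>a y\<^sup>b\<close> and \<open>t y t\<^sup>-\<^sup>1 = x\<^sup>c y\<^sup>d\<close>: conjugation by \<open>t\<close> preserves \<open>ker \<rho>\<close>.\<close>
lemma ker_rho_rel_t_lift:
  assumes "ker_rho_rel a b c d p q"
  shows "ker_rho_rel a b c d (t_lift a b c d p) (t_lift a b c d q)"
proof (rule equivclp_preserved[OF equivp_evquivclp _ assms])
  fix p q :: "(real \<times> real) \<times> real"
  assume "ker_rho_gen a b c d p q"
  moreover obtain x y s where p: "p = ((x, y), s)"
    by (metis prod.collapse)
  ultimately consider "q = ((x + 1, y), s)" | "q = ((x, y + 1), s)"
    | "q = t_lift a b c d (t_lift a b c d p)"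
    unfolding ker_rho_gen_def by auto
  then show "ker_rho_rel a b c d (t_lift a b c d p) (t_lift a b c d q)"
  proof cases
    case 1
    then show ?thesis
      using ker_rho_rel_translate[of a b c d "of_int a * x + of_int c * y" "of_int b * x + of_int d * y" "s + 1" a b]
      by (simp add: p t_lift_def Theta_map_def algebra_simps)
  next
    case 2
    then show ?thesis
      using ker_rho_rel_translate[of a b c d "of_int a * x + of_int c * y" "of_int b * x + of_int d * y" "s + 1" c d]
      by (simp add: p t_lift_def Theta_map_def algebra_simps)
  next
    case 3
    then show ?thesis
      by (simp add: ker_rho_rel_t_lift_twice)
  qed
qed

lemma surj_t_lift:
  assumes "a * d - b * c = 1 \<or> a * d - b * c = -1"
  shows "surj (t_lift a b c d)"
proof -
  define \<delta> where "\<delta> = real_of_int (a * d - b * c)"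
  have "(a * d - b * c) * (a * d - b * c) = 1"
    using assms by auto
  then have \<delta>: "\<delta> * \<delta> = 1"
    unfolding \<delta>_def by (metis of_int_1 of_int_mult)
  text \<open>\<open>\<Theta>\<^sup>-\<^sup>1 = det \<Theta> \<cdot> adj \<Theta>\<close>, since \<open>det \<Theta> = \<plusminus>1\<close>.\<close>
  have "t_lift a b c d ((\<delta> * (of_int d * x - of_int c * y), \<delta> * (of_int a * y - of_int b * x)), s - 1)
        = ((x, y), s)" for x y s
  proof -
    have "of_int a * (\<delta> * (of_int d * x - of_int c * y)) + of_int c * (\<delta> * (of_int a * y - of_int b * x)) = \<delta> * \<delta> * x"
      "of_int b * (\<delta> * (of_int d * x - of_int c * y)) + of_int d * (\<delta> * (of_int a * y - of_int b * x)) = \<delta> * \<delta> * y"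
      unfolding \<delta>_def by (simp_all add: algebra_simps)
    then show ?thesis
      using \<delta> by (simp add: t_lift_def Theta_map_def)
  qed
  then have "t_lift a b c d ((\<lambda>((x, y), s). ((\<delta> * (of_int d * x - of_int c * y), \<delta> * (of_int a * y - of_int b * x)), s - 1)) p) = p" for p
    by (cases p) auto
  then show ?thesis
    by (rule surjI)
qed

lemma t_rho_class:
  assumes "a * d - b * c = 1 \<or> a * d - b * c = -1"
  shows "t_rho a b c d {q. ker_rho_rel a b c d p q} = {q. ker_rho_rel a b c d (t_lift a b c d p) q}"
  unfolding t_rho_def
  using equivp_evquivclp surj_t_lift[OF assms] ker_rho_rel_t_lift ker_rho_rel_t_lift_twice
  by (rule image_equiv_class)

lemma M_rho_real_map_coincidence:
  assumes "continuous_map (M_rho a b c d) euclideanreal \<phi>"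
  shows "\<exists>p. \<phi> {q. ker_rho_rel a b c d p q} = \<phi> {q. ker_rho_rel a b c d (t_lift a b c d p) q}"
proof -
  let ?E = "ker_rho_rel a b c d" and ?t = "t_lift a b c d"
  define h where "h p = \<phi> {q. ?E p q}" for p
  have \<phi>: "continuous_map (quot_top ?E) euclideanreal \<phi>"
    using assms unfolding M_rho_def .
  have "continuous_map euclidean euclideanreal h"
    using continuous_map_compose[OF continuous_map_quot_top_class[OF equivp_evquivclp] \<phi>]
    by (simp add: h_def o_def)
  then have h_cont: "continuous_on UNIV h"
    by simp
  have "continuous_on UNIV ?t"
    unfolding t_lift_def Theta_map_def by (intro continuous_intros)
  then have "continuous_on UNIV (\<lambda>p. h p - h (?t p))"
    by (intro continuous_intros h_cont continuous_on_compose2[OF h_cont]) auto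
  moreover have "h (?t (?t p)) = h p" for p
    using equivp_class_eq[OF equivp_evquivclp ker_rho_rel_t_lift_twice] by (simp add: h_def)
  ultimately obtain p where "h p - h (?t p) = 0"
    using connected_zero_of_opposite_values[OF connected_UNIV, of "\<lambda>p. h p - h (?t p)" 0 "?t 0"]
    by auto
  then show ?thesis
    unfolding h_def by (intro exI[of _ p]) simp
qed

lemma BU_M_rho_dim1:
  assumes "a * d - b * c = 1 \<or> a * d - b * c = -1"
    and f: "continuous_map (M_rho a b c d) (Euclidean_space 1) f"
  shows "\<exists>x\<in>topspace (M_rho a b c d). f x = f (t_rho a b c d x)"
proof -
  let ?E = "ker_rho_rel a b c d" and ?t = "t_lift a b c d"
  have "continuous_map (M_rho a b c d) euclideanreal (\<lambda>x. f x 0)"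
    using f unfolding Euclidean_space_def continuous_map_in_subtopology continuous_map_componentwise_UNIV
    by simp
  then obtain p where p: "f {q. ?E p q} 0 = f {q. ?E (?t p) q} 0"
    using M_rho_real_map_coincidence by blast
  define x where "x = {q. ?E p q}"
  have tx: "t_rho a b c d x = {q. ?E (?t p) q}"
    unfolding x_def by (rule t_rho_class[OF assms(1)])
  have x: "x \<in> topspace (M_rho a b c d)" "t_rho a b c d x \<in> topspace (M_rho a b c d)"
    unfolding tx unfolding x_def M_rho_def by (simp_all add: topspace_quot_top class_in_quotient)
  then have "f x \<in> topspace (Euclidean_space 1)" "f (t_rho a b c d x) \<in> topspace (Euclidean_space 1)"
    using continuous_map_image_subset_topspace[OF f] by blast+
  then have "f x i = f (t_rho a b c d x) i" for i
    using p unfolding tx by (cases "i = 0") (auto simp: x_def topspace_Euclidean_space)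
  then show ?thesis
    using x by auto
qed

definition half_turn :: "real \<Rightarrow> nat \<Rightarrow> real" where
  "half_turn s = (\<lambda>i. if i = 0 then cos (pi * s) else if i = 1 then sin (pi * s) else 0)"

lemma half_turn_add_1: "half_turn (s + 1) = (\<lambda>i. - half_turn s i)"
  unfolding half_turn_def by (simp add: fun_eq_iff distrib_left cos_periodic_pi sin_periodic_pi)

lemma half_turn_add_2: "half_turn (s + 2) = half_turn s"
  using half_turn_add_1[of s] half_turn_add_1[of "s + 1"] by (simp add: add.assoc)

lemma half_turn_neq_neg: "half_turn s \<noteq> (\<lambda>i. - half_turn s i)"
proof
  assume "half_turn s = (\<lambda>i. - half_turn s i)"
  then have "half_turn s 0 = - half_turn s 0" "half_turn s 1 = - half_turn s 1"
    by metis+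
  then have "cos (pi * s) = 0" "sin (pi * s) = 0"
    unfolding half_turn_def by simp_all
  then show False
    using sin_cos_squared_add[of "pi * s"] by simp
qed

lemma continuous_map_half_turn:
  assumes "2 \<le> k"
  shows "continuous_map euclidean (Euclidean_space k) (\<lambda>p::'a::metric_space \<times> real. half_turn (snd p))"
proof -
  have "continuous_map euclidean euclideanreal (\<lambda>p::'a \<times> real. half_turn (snd p) i)" for i
    unfolding half_turn_def by (cases "i = 0"; cases "i = 1") (auto intro!: continuous_intros)
  then have "continuous_map euclidean (Euclidean_space k) (\<lambda>p::'a \<times> real. \<lambda>i. if i < k then half_turn (snd p) i else 0)"
    unfolding continuous_map_componentwise_Euclidean_space by blast
  moreover have "(\<lambda>p::'a \<times> real. \<lambda>i. if i < k then half_turn (snd p) i else 0) = (\<lambda>p. half_turn (snd p))"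
    using assms by (auto simp: half_turn_def fun_eq_iff)
  ultimately show ?thesis by simp
qed

lemma half_turn_ker_rho_invariant:
  assumes "ker_rho_rel a b c d p q"
  shows "half_turn (snd p) = half_turn (snd q)"
proof (rule equivclp_preserved[where T = "\<lambda>p. half_turn (snd p)", OF identity_equivp _ assms])
  fix p q
  assume "ker_rho_gen a b c d p q"
  then have "snd q = snd p \<or> snd q = snd p + 2"
    unfolding ker_rho_gen_def t_lift_def by auto
  then show "half_turn (snd p) = half_turn (snd q)"
    using half_turn_add_2 by auto
qed

lemma M_rho_coincidence_free_map:
  assumes "a * d - b * c = 1 \<or> a * d - b * c = -1" "2 \<le> k"
  shows "\<exists>f. continuous_map (M_rho a b c d) (Euclidean_space k) f
           \<and> (\<forall>x\<in>topspace (M_rho a b c d). f x \<noteq> f (t_rho a b c d x))"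
proof (intro exI conjI ballI)
  let ?E = "ker_rho_rel a b c d" and ?F = "\<lambda>C. half_turn (snd (SOME p. p \<in> C))"
  have eqv: "equivp ?E" by simp
  show "continuous_map (M_rho a b c d) (Euclidean_space k) ?F"
    unfolding M_rho_def
    using eqv continuous_map_half_turn[OF assms(2)] half_turn_ker_rho_invariant
    by (rule continuous_map_quot_top_descend)
  have F_class: "half_turn (snd (SOME q. ?E p q)) = half_turn (snd p)" for p
    using half_turn_ker_rho_invariant[OF equivp_some_in_class[OF eqv]] by simp
  fix x
  assume "x \<in> topspace (M_rho a b c d)"
  then obtain p where x: "x = {q. ?E p q}"
    by (auto simp: M_rho_def topspace_quot_top elim: quotient_elem_class)
  show "?F x \<noteq> ?F (t_rho a b c d x)"
    using half_turn_neq_neg[of "snd p"]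
    by (simp add: x t_rho_class[OF assms(1)] F_class t_lift_def half_turn_add_1)
qed

theorem mainTheorem1:
  fixes a b c d :: int
  assumes "a * d - b * c = 1 \<or> a * d - b * c = -1"
    and "\<forall>e::complex. (\<exists>v1 v2. (v1, v2) \<noteq> (0, 0) \<and>
            of_int a * v1 + of_int c * v2 = e * v1 \<and>
            of_int b * v1 + of_int d * v2 = e * v2) \<longrightarrow> cmod e \<noteq> 1"
  shows "BU_index (M_rho a b c d) (t_rho a b c d) = 1"
  using BU_M_rho_dim1[OF assms(1)] M_rho_coincidence_free_map[OF assms(1)]
  by (intro BU_index_eqI) auto

end
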